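(* Let $\mathbb{R}^{2n}$ have coordinates $(x_1,y_1,\dots,x_n,y_n)$. For a symplectic form $\omega = \sum_{i=1}^n f_i(x_i,y_i)\,dx_i\wedge dy_i$ with $f_i:\mathbb{R}^2\to\mathbb{R}$ smooth and nowhere vanishing, define for $x\in\mathbb{R}^{2n}$: $m_\omega(x) = \min\{f_i(x_i,y_i) : 1\le i\le n\}$ and $M_\omega(x) = \max\{f_i(x_i,y_i) : 1\le i\le n\}$. Let $\omega_1 = \sum_{i=1}^n f_i(x_i,y_i)\,dx_i\wedge dy_i$ and $\omega_2 = \sum_{i=1}^n g_i(x_i,y_i)\,dx_i\wedge dy_i$ be two such forms (all $f_i,g_i$ smooth and nowhere vanishing). If $\omega_1$ and $\omega_2$ are $\omega_{\mathrm{std}}$-symplectomorphic, then $\inf_{x}m_{\omega_1}(x) = \inf_x m_{\omega_2}(x)$, $\sup_x m_{\omega_1}(x) = \sup_x m_{\omega_2}(x)$, $\inf_x M_{\omega_1}(x) = \inf_x M_{\omega_2}(x)$, and $\sup_x M_{\omega_1}(x) = \sup_x M_{\omega_2}(x)$, where $x$ ranges over $\mathbb{R}^{2n}$ (values in the extended reals).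
   Context: $\omega_{\mathrm{std}} = \sum_{i=1}^n dx_i\wedge dy_i$. $\operatorname{Symp}(\mathbb{R}^{2n},\omega_{\mathrm{std}})$ is the set of diffeomorphisms $\varphi$ of $\mathbb{R}^{2n}$ with $\varphi^*\omega_{\mathrm{std}} = \omega_{\mathrm{std}}$, where $(\varphi^*\omega)(x)(v,w) = \omega(\varphi(x))(d\varphi_x v, d\varphi_x w)$. Symplectic forms $\omega_1,\omega_2$ are $\omega_{\mathrm{std}}$-symplectomorphic if there is $\varphi\in\operatorname{Symp}(\mathbb{R}^{2n},\omega_{\mathrm{std}})$ with $\varphi^*\omega_1 = \omega_2$. *)

theory Defs
  imports "HOL-Analysis.Analysis"
begin

text \<open>Iterated partial derivatives (along basis directions) of a map between
  Euclidean spaces; smooth = C-infinity = all of them exist as Frechet derivatives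
  everywhere.\<close>

inductive_set iter_partials ::
  "('a::euclidean_space \<Rightarrow> 'b::real_normed_vector) \<Rightarrow> ('a \<Rightarrow> 'b) set"
  for f where
  base: "f \<in> iter_partials f"
| step: "g \<in> iter_partials f \<Longrightarrow> b \<in> Basis \<Longrightarrow>
           (\<lambda>x. frechet_derivative g (at x) b) \<in> iter_partials f"

definition smooth :: "('a::euclidean_space \<Rightarrow> 'b::real_normed_vector) \<Rightarrow> bool" where
  "smooth f \<longleftrightarrow> (\<forall>g \<in> iter_partials f. g differentiable_on UNIV)"

definition diffeomorphism :: "('a::euclidean_space \<Rightarrow> 'a) \<Rightarrow> bool" where
  "diffeomorphism \<phi> \<longleftrightarrow> bij \<phi> \<and> smooth \<phi> \<and> smooth (inv \<phi>)"

text \<open>Points of R^{2n} are (real * real)^n: the i-th component is (x_i, y_i).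
  A 2-form is a map point \<Rightarrow> tangent vector \<Rightarrow> tangent vector \<Rightarrow> real.\<close>

type_synonym 'n pt = "(real \<times> real) ^ 'n"
type_synonym 'n form2 = "'n pt \<Rightarrow> 'n pt \<Rightarrow> 'n pt \<Rightarrow> real"

text \<open>The split form  sum_i f_i(x_i,y_i) dx_i wedge dy_i.\<close>
definition split_form :: "('n::finite \<Rightarrow> real \<times> real \<Rightarrow> real) \<Rightarrow> 'n form2" where
  "split_form f p v w =
     (\<Sum>i\<in>UNIV. f i (p $ i) * (fst (v $ i) * snd (w $ i) - snd (v $ i) * fst (w $ i)))"

definition omega_std :: "'n::finite form2" where
  "omega_std = split_form (\<lambda>i z. 1)"

definition pullback :: "('n::finite pt \<Rightarrow> 'n pt) \<Rightarrow> 'n form2 \<Rightarrow> 'n form2" where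
  "pullback \<phi> \<omega> p v w =
     \<omega> (\<phi> p) (frechet_derivative \<phi> (at p) v) (frechet_derivative \<phi> (at p) w)"

definition symplecto_std :: "('n::finite pt \<Rightarrow> 'n pt) \<Rightarrow> bool" where
  "symplecto_std \<phi> \<longleftrightarrow> diffeomorphism \<phi> \<and> pullback \<phi> omega_std = omega_std"

definition std_symplectomorphic :: "'n::finite form2 \<Rightarrow> 'n form2 \<Rightarrow> bool" where
  "std_symplectomorphic \<omega>1 \<omega>2 \<longleftrightarrow> (\<exists>\<phi>. symplecto_std \<phi> \<and> pullback \<phi> \<omega>1 = \<omega>2)"

definition m_omega :: "('n::finite \<Rightarrow> real \<times> real \<Rightarrow> real) \<Rightarrow> 'n pt \<Rightarrow> real" where
  "m_omega f p = Min {f i (p $ i) | i. True}"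

definition M_omega :: "('n::finite \<Rightarrow> real \<times> real \<Rightarrow> real) \<Rightarrow> 'n pt \<Rightarrow> real" where
  "M_omega f p = Max {f i (p $ i) | i. True}"

end

theory Submission
  imports Defs
begin

text \<open>At a point p, the derivative D of the symplectomorphism \<phi> is linear, preserves the
  standard form, and pulls the constant-coefficient form \<Sum> a_i dx_i \<and> dy_i with
  a_i = f_i(\<phi>(p)_i) back to the one with b_i = g_i(p_i). Preserving a nondegenerate form,
  D is invertible. A real c is one of the a_i iff \<Sum> (a_i - c) dx_i \<and> dy_i is degenerate, and
  this form is pulled back to \<Sum> (b_i - c) dx_i \<and> dy_i; so {a_i} = {b_i}. Hence
  m_f \<circ> \<phi> = m_g and M_f \<circ> \<phi> = M_g, and since \<phi> is onto both sides have the same ranges.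
  Smoothness and nonvanishing of the coefficients f_i, g_i are never used.\<close>

definition diag_form :: "('n::finite \<Rightarrow> real) \<Rightarrow> 'n pt \<Rightarrow> 'n pt \<Rightarrow> real" where
  "diag_form a v w = (\<Sum>i\<in>UNIV. a i * (fst (v $ i) * snd (w $ i) - snd (v $ i) * fst (w $ i)))"

definition degenerate :: "('a::zero \<Rightarrow> 'a \<Rightarrow> 'b::zero) \<Rightarrow> bool" where
  "degenerate B \<longleftrightarrow> (\<exists>v. v \<noteq> 0 \<and> (\<forall>w. B v w = 0))"

lemma split_form_eq_diag_form: "split_form f p = diag_form (\<lambda>i. f i (p $ i))"
  by (simp add: fun_eq_iff split_form_def diag_form_def)

lemma omega_std_eq_diag_form: "omega_std p = diag_form (\<lambda>_. 1)"
  by (simp add: omega_std_def split_form_eq_diag_form)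

lemma diag_form_axis:
  "diag_form a v (axis i (x, y)) = a i * (fst (v $ i) * y - snd (v $ i) * x)"
proof -
  have "diag_form a v (axis i (x, y)) =
      (\<Sum>j\<in>UNIV. if j = i then a i * (fst (v $ i) * y - snd (v $ i) * x) else 0)"
    unfolding diag_form_def by (rule sum.cong) (auto simp: axis_def)
  then show ?thesis by simp
qed

lemma diag_form_diff_const:
  "diag_form (\<lambda>i. a i - c) v w = diag_form a v w - c * diag_form (\<lambda>_. 1) v w"
  unfolding diag_form_def sum_distrib_left sum_subtractf[symmetric]
  by (rule sum.cong) (auto simp: algebra_simps)

lemma diag_form_zero_left [simp]: "diag_form a 0 w = 0"
  by (simp add: diag_form_def)

lemma degenerate_diag_form_iff: "degenerate (diag_form a) \<longleftrightarrow> (\<exists>i. a i = 0)"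
proof
  assume "degenerate (diag_form a)"
  then obtain v where "v \<noteq> 0" and v: "\<And>w. diag_form a v w = 0"
    unfolding degenerate_def by blast
  then obtain i where "v $ i \<noteq> 0" by (metis vec_eq_iff zero_index)
  then have "fst (v $ i) \<noteq> 0 \<or> snd (v $ i) \<noteq> 0" by (simp add: prod_eq_iff)
  moreover have "a i * fst (v $ i) = 0" "a i * snd (v $ i) = 0"
    using v[of "axis i (0, 1)"] v[of "axis i (1, 0)"] by (simp_all add: diag_form_axis)
  ultimately show "\<exists>i. a i = 0" by auto
next
  assume "\<exists>i. a i = 0"
  then obtain i where "a i = 0" by blast
  then have "\<forall>w. diag_form a (axis i (1, 0)) w = 0"
    unfolding diag_form_def by (auto intro!: sum.neutral simp: axis_def)
  moreover have "axis i (1::real, 0::real) \<noteq> 0"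
    by (simp add: prod_eq_iff)
  ultimately show "degenerate (diag_form a)"
    unfolding degenerate_def by blast
qed

lemma degenerate_pullback_iff:
  fixes D :: "'a::real_vector \<Rightarrow> 'a" and B :: "'a \<Rightarrow> 'a \<Rightarrow> 'b::zero"
  assumes "linear D" and "bij D"
  shows "degenerate (\<lambda>v w. B (D v) (D w)) \<longleftrightarrow> degenerate B"
proof -
  have all: "(\<forall>w. P (D w)) \<longleftrightarrow> (\<forall>w. P w)" and ex: "(\<exists>w. P (D w)) \<longleftrightarrow> (\<exists>w. P w)" for P
    using bij_is_surj[OF \<open>bij D\<close>] by (metis surjD)+
  have "D v = 0 \<longleftrightarrow> v = 0" for v
    using linear_0[OF \<open>linear D\<close>] bij_is_inj[OF \<open>bij D\<close>] by (metis injD)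
  moreover have "(\<forall>w. B (D v) (D w) = 0) \<longleftrightarrow> (\<forall>w. B (D v) w = 0)" for v
    using all[of "\<lambda>w. B (D v) w = 0"] .
  ultimately have "degenerate (\<lambda>v w. B (D v) (D w)) \<longleftrightarrow> (\<exists>v. D v \<noteq> 0 \<and> (\<forall>w. B (D v) w = 0))"
    unfolding degenerate_def by simp
  also have "\<dots> \<longleftrightarrow> degenerate B"
    unfolding degenerate_def by (rule ex)
  finally show ?thesis .
qed

lemma linear_preserving_nondegenerate_imp_bij:
  fixes D :: "'a::euclidean_space \<Rightarrow> 'a" and B :: "'a \<Rightarrow> 'a \<Rightarrow> 'b::zero"
  assumes "linear D" and pres: "\<And>v w. B (D v) (D w) = B v w"
    and B0: "\<And>w. B 0 w = 0" and "\<not> degenerate B"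
  shows "bij D"
proof -
  have "v = 0" if "D v = 0" for v
  proof -
    have "B v w = 0" for w
      using pres[of v w] that B0 by simp
    then show ?thesis
      using \<open>\<not> degenerate B\<close> unfolding degenerate_def by blast
  qed
  then have "inj D"
    unfolding linear_injective_0[OF \<open>linear D\<close>] by blast
  then show ?thesis
    using linear_injective_imp_surjective[OF \<open>linear D\<close>] by (simp add: bij_def)
qed

lemma diag_form_coefficients_eq:
  fixes D :: "'n::finite pt \<Rightarrow> 'n pt"
  assumes "linear D"
    and std: "\<And>v w. diag_form (\<lambda>_. 1) (D v) (D w) = diag_form (\<lambda>_. 1) v w"
    and ab: "\<And>v w. diag_form a (D v) (D w) = diag_form b v w"
  shows "range a = range b"
proof -
  have "bij D"
    by (rule linear_preserving_nondegenerate_imp_bij[of D "diag_form (\<lambda>_. 1)"])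
      (simp_all add: \<open>linear D\<close> std degenerate_diag_form_iff)
  have pull: "(\<lambda>v w. diag_form (\<lambda>i. a i - c) (D v) (D w)) = diag_form (\<lambda>i. b i - c)" for c
    by (simp add: fun_eq_iff diag_form_diff_const ab std)
  have "degenerate (diag_form (\<lambda>i. a i - c)) \<longleftrightarrow> degenerate (diag_form (\<lambda>i. b i - c))" for c
    using degenerate_pullback_iff[OF \<open>linear D\<close> \<open>bij D\<close>, of "diag_form (\<lambda>i. a i - c)"]
    unfolding pull by simp
  then have "(\<exists>i. a i = c) \<longleftrightarrow> (\<exists>i. b i = c)" for c
    by (simp add: degenerate_diag_form_iff)
  then show ?thesis
    by (simp add: set_eq_iff image_iff eq_commute)
qed

lemma smooth_imp_linear_frechet_derivative:
  assumes "smooth \<phi>"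
  shows "linear (frechet_derivative \<phi> (at p))"
proof -
  have "\<phi> differentiable (at p)"
    using assms iter_partials.base unfolding smooth_def differentiable_on_def by blast
  then show ?thesis
    using frechet_derivative_works has_derivative_linear by blast
qed

lemma symplecto_std_coefficients_eq:
  assumes "symplecto_std \<phi>" and "pullback \<phi> (split_form f) = split_form g"
  shows "range (\<lambda>i. f i (\<phi> p $ i)) = range (\<lambda>i. g i (p $ i))"
proof (rule diag_form_coefficients_eq)
  let ?D = "frechet_derivative \<phi> (at p)"
  show "linear ?D"
    using assms(1) smooth_imp_linear_frechet_derivative
    unfolding symplecto_std_def diffeomorphism_def by blast
  fix v w
  show "diag_form (\<lambda>_. 1) (?D v) (?D w) = diag_form (\<lambda>_. 1) v w"
    using assms(1) unfolding symplecto_std_def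
    by (metis omega_std_eq_diag_form pullback_def)
  show "diag_form (\<lambda>i. f i (\<phi> p $ i)) (?D v) (?D w) = diag_form (\<lambda>i. g i (p $ i)) v w"
    using assms(2) by (metis pullback_def split_form_eq_diag_form)
qed

theorem theorem2p6:
  fixes f g :: "'n::finite \<Rightarrow> real \<times> real \<Rightarrow> real"
  assumes f_smooth: "\<And>i. smooth (f i)" and f_nz: "\<And>i z. f i z \<noteq> 0"
      and g_smooth: "\<And>i. smooth (g i)" and g_nz: "\<And>i z. g i z \<noteq> 0"
      and symp: "std_symplectomorphic (split_form f) (split_form g)"
  shows "(INF p. ereal (m_omega f p)) = (INF p. ereal (m_omega g p)) \<and>
         (SUP p. ereal (m_omega f p)) = (SUP p. ereal (m_omega g p)) \<and>
         (INF p. ereal (M_omega f p)) = (INF p. ereal (M_omega g p)) \<and>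
         (SUP p. ereal (M_omega f p)) = (SUP p. ereal (M_omega g p))"
proof -
  obtain \<phi> where "symplecto_std \<phi>" and pb: "pullback \<phi> (split_form f) = split_form g"
    using symp unfolding std_symplectomorphic_def by blast
  then have "surj \<phi>"
    unfolding symplecto_std_def diffeomorphism_def by (simp add: bij_is_surj)
  then have range_comp: "range (h \<circ> \<phi>) = range h" for h :: "'n pt \<Rightarrow> real"
    unfolding image_comp[symmetric] by simp
  have "range (\<lambda>i. f i (\<phi> p $ i)) = range (\<lambda>i. g i (p $ i))" for p
    using symplecto_std_coefficients_eq[OF \<open>symplecto_std \<phi>\<close> pb] .
  then have "m_omega f \<circ> \<phi> = m_omega g" and "M_omega f \<circ> \<phi> = M_omega g"
    by (simp_all add: fun_eq_iff m_omega_def M_omega_def full_SetCompr_eq)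
  then have "range (m_omega f) = range (m_omega g)" and "range (M_omega f) = range (M_omega g)"
    using range_comp[of "m_omega f"] range_comp[of "M_omega f"] by simp_all
  moreover have "range (\<lambda>p. ereal (h p)) = ereal ` range h" for h :: "'n pt \<Rightarrow> real"
    by (simp add: image_image)
  ultimately show ?thesis
    by (simp only:)
qed

end
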